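(* Let $f:\mathbb{Z}\to\mathbb{R}$ be defined by $f(x)=\left|\sin\left(\frac{x+1}{100}\right)\right|$. Then $x=-1$ is the only global minimizer of $f$ on $\mathbb{Z}$; that is, $f(-1)=\min_{x\in\mathbb{Z}} f(x)$ and $f(x)>f(-1)$ for every integer $x\neq -1$. *)

theory Defs
  imports Complex_Main
begin

definition f :: "int \<Rightarrow> real" where
  "f x = \<bar>sin ((real_of_int x + 1) / 100)\<bar>"

end

theory Submission
  imports Defs "HOL-Computational_Algebra.Polynomial"
begin

text \<open>
  \<open>f\<close> is nonnegative and vanishes at \<open>-1\<close>; any other zero would give
  \<open>(x + 1) / 100 = k \<pi>\<close> with \<open>k \<noteq> 0\<close>, making \<open>\<pi>\<close> rational. Irrationality of \<open>\<pi>\<close>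
  is Niven's argument: if \<open>\<pi> = a / b\<close>, all derivatives of \<open>Q x = x\<^sup>n (a - b x)\<^sup>n / n!\<close>
  are integers at \<open>0\<close> and, since \<open>Q (\<pi> - x) = Q x\<close>, also at \<open>\<pi>\<close>. Hence so are the
  values there of \<open>F = Q - Q'' + Q'''' - \<dots>\<close>, and as \<open>F'' + F = Q\<close>, the mean value theorem
  for \<open>F' sin - F cos\<close> gives \<open>F \<pi> + F 0 = \<pi> Q z sin z\<close> for some \<open>0 < z < \<pi>\<close>, a number
  strictly between \<open>0\<close> and \<open>\<pi> (\<pi> a)\<^sup>n / n!\<close>, which is below \<open>1\<close> for large \<open>n\<close>.
\<close>

lemma higher_pderiv_eq_0_if_degree_less:
  fixes p :: "'a::{comm_semiring_1,semiring_no_zero_divisors,semiring_char_0} poly"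
  assumes "degree p < k"
  shows "(pderiv ^^ k) p = 0"
proof -
  obtain m where k: "k = Suc m" and "degree p \<le> m"
    using assms by (cases k) auto
  then have "degree ((pderiv ^^ m) p) = 0"
    by (simp add: degree_higher_pderiv)
  then show ?thesis
    using k by (simp add: pderiv_eq_0_iff)
qed

lemma pderiv_pderiv_add_alternating_sum:
  fixes Q :: "'a::{idom,ring_char_0} poly"
  assumes deg: "degree Q < 2 * m"
  defines "F \<equiv> (\<Sum>j<m. smult ((-1) ^ j) ((pderiv ^^ (2 * j)) Q))"
  shows "pderiv (pderiv F) + F = Q"
proof -
  have telescope:
    "(\<Sum>j<k. smult ((-1) ^ j) ((pderiv ^^ Suc (Suc (2 * j))) Q))
       + (\<Sum>j<k. smult ((-1) ^ j) ((pderiv ^^ (2 * j)) Q))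
     = Q - smult ((-1) ^ k) ((pderiv ^^ (2 * k)) Q)" for k
  proof (induction k)
    case 0
    then show ?case by simp
  next
    case (Suc k)
    have "2 * Suc k = Suc (Suc (2 * k))" by simp
    with Suc.IH show ?case by (simp add: algebra_simps)
  qed
  have "pderiv (pderiv F) = (pderiv ^^ 2) F"
    by (simp add: numeral_2_eq_2)
  also have "\<dots> = (\<Sum>j<m. smult ((-1) ^ j) ((pderiv ^^ Suc (Suc (2 * j))) Q))"
    unfolding F_def higher_pderiv_sum higher_pderiv_smult by (simp add: numeral_2_eq_2)
  finally have "pderiv (pderiv F) = \<dots>" .
  moreover have "(pderiv ^^ (2 * m)) Q = 0"
    using deg by (rule higher_pderiv_eq_0_if_degree_less)
  ultimately show ?thesis
    using telescope[of m] unfolding F_def by simp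
qed

lemma coeff_power_in_Ints:
  fixes p :: "'a::comm_ring_1 poly"
  assumes "\<And>k. coeff p k \<in> \<int>"
  shows "coeff (p ^ n) k \<in> \<int>"
proof (induction n arbitrary: k)
  case 0
  then show ?case by (simp add: coeff_1)
next
  case (Suc n)
  show ?case
    unfolding power_Suc coeff_mult by (intro Ints_sum Ints_mult assms Suc.IH)
qed

lemma higher_pderiv_reflect:
  fixes Q :: "'a::idom poly"
  assumes "pcompose Q [:c, -1:] = Q"
  shows "(pderiv ^^ k) Q = smult ((-1) ^ k) (pcompose ((pderiv ^^ k) Q) [:c, -1:])"
proof (induction k)
  case 0
  then show ?case using assms by simp
next
  case (Suc k)
  have "(pderiv ^^ Suc k) Q = pderiv (smult ((-1) ^ k) (pcompose ((pderiv ^^ k) Q) [:c, -1:]))"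
    using Suc.IH by simp
  also have "\<dots> = smult ((-1) ^ Suc k) (pcompose ((pderiv ^^ Suc k) Q) [:c, -1:])"
    by (simp add: pderiv_smult pderiv_pcompose pderiv_pCons)
  finally show ?case .
qed

definition niven_poly :: "nat \<Rightarrow> real \<Rightarrow> real \<Rightarrow> real poly" where
  "niven_poly n a b = smult (1 / fact n) (monom 1 n * [:a, -b:] ^ n)"

lemma poly_niven_poly: "poly (niven_poly n a b) x = x ^ n * (a - b * x) ^ n / fact n"
  by (simp add: niven_poly_def poly_monom algebra_simps)

lemma degree_niven_poly: "degree (niven_poly n a b) \<le> 2 * n"
proof -
  have "degree (monom (1::real) n * [:a, -b:] ^ n) \<le> degree (monom (1::real) n) + degree ([:a, -b:] ^ n)"
    by (rule degree_mult_le)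
  also have "\<dots> \<le> n + degree [:a, -b:] * n"
    by (intro add_mono degree_power_le) (simp add: degree_monom_eq)
  also have "\<dots> \<le> 2 * n" by simp
  finally show ?thesis by (simp add: niven_poly_def)
qed

lemma higher_pderiv_niven_poly_at_0_in_Ints:
  assumes "a \<in> \<int>" "b \<in> \<int>"
  shows "poly ((pderiv ^^ k) (niven_poly n a b)) 0 \<in> \<int>"
proof -
  define P where "P = monom (1::real) n * [:a, -b:] ^ n"
  have "coeff [:a, -b:] i \<in> \<int>" for i
    using assms by (cases i) (auto simp: coeff_pCons split: nat.splits)
  from coeff_power_in_Ints[OF this] have coeff_P: "coeff P i \<in> \<int>" for i
    unfolding P_def coeff_monom_mult by simp
  have value_at_0: "poly ((pderiv ^^ k) (niven_poly n a b)) 0 = fact k * (coeff P k / fact n)"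
    by (simp add: niven_poly_def P_def poly_0_coeff_0 coeff_higher_pderiv
        pochhammer_fact[symmetric])
  show ?thesis
  proof (cases "k < n")
    case True
    then show ?thesis by (simp add: value_at_0 P_def coeff_monom_mult)
  next
    case False
    then have "fact k / (fact n :: real) = of_nat (fact k div fact n)"
      by (simp add: fact_dvd real_of_nat_div)
    then show ?thesis
      unfolding value_at_0 using coeff_P
      by (metis Ints_mult Ints_of_nat times_divide_eq_left times_divide_eq_right)
  qed
qed

lemma higher_pderiv_niven_poly_at_quotient_in_Ints:
  assumes "a \<in> \<int>" "b \<in> \<int>" "b \<noteq> 0"
  shows "poly ((pderiv ^^ k) (niven_poly n a b)) (a / b) \<in> \<int>"
proof -
  have "poly (pcompose (niven_poly n a b) [:a / b, -1:]) x = poly (niven_poly n a b) x" for x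
  proof -
    have "poly (pcompose (niven_poly n a b) [:a / b, -1:]) x = (a / b - x) ^ n * (b * x) ^ n / fact n"
      using \<open>b \<noteq> 0\<close> by (simp add: poly_pcompose poly_niven_poly algebra_simps)
    also have "\<dots> = x ^ n * (b * (a / b - x)) ^ n / fact n"
      by (simp only: power_mult_distrib mult_ac)
    also have "b * (a / b - x) = a - b * x"
      using \<open>b \<noteq> 0\<close> by (simp add: algebra_simps)
    finally show ?thesis
      by (simp add: poly_niven_poly)
  qed
  then have "pcompose (niven_poly n a b) [:a / b, -1:] = niven_poly n a b"
    by (rule poly_ext)
  then have "poly ((pderiv ^^ k) (niven_poly n a b)) (a / b)
             = (-1) ^ k * poly ((pderiv ^^ k) (niven_poly n a b)) 0"
    by (subst higher_pderiv_reflect) (simp_all add: poly_pcompose)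
  then show ?thesis
    using higher_pderiv_niven_poly_at_0_in_Ints[OF assms(1,2)]
    by (metis Ints_1 Ints_minus Ints_mult Ints_power)
qed

lemma poly_pi_add_poly_0_eq_mean_value:
  assumes "pderiv (pderiv F) + F = Q"
  obtains z where "0 < z" "z < pi" "poly F pi + poly F 0 = pi * (poly Q z * sin z)"
proof -
  define G where "G x = poly (pderiv F) x * sin x - poly F x * cos x" for x
  have "DERIV G x :> poly Q x * sin x" for x
  proof -
    have "DERIV G x :> poly (pderiv (pderiv F)) x * sin x + poly (pderiv F) x * cos x
                       - (poly (pderiv F) x * cos x - poly F x * sin x)"
      unfolding G_def by (auto intro!: derivative_eq_intros)
    moreover have "poly (pderiv (pderiv F)) x + poly F x = poly Q x"
      using arg_cong[OF assms, of "\<lambda>p. poly p x"] by simp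
    ultimately show ?thesis
      by (simp add: algebra_simps flip: distrib_left)
  qed
  then obtain z where "0 < z" "z < pi" "G pi - G 0 = (pi - 0) * (poly Q z * sin z)"
    using MVT2[of 0 pi G "\<lambda>x. poly Q x * sin x"] pi_gt_zero by blast
  moreover have "G pi - G 0 = poly F pi + poly F 0"
    by (simp add: G_def)
  ultimately show ?thesis using that by simp
qed

lemma niven_poly_times_sin_bounds:
  assumes "b > 0" "a = b * pi" "0 < z" "z < pi"
  shows "0 < poly (niven_poly n a b) z * sin z"
    and "poly (niven_poly n a b) z * sin z \<le> (pi * a) ^ n / fact n"
proof -
  have "a - b * z > 0" using assms by simp
  then have Q_pos: "poly (niven_poly n a b) z > 0"
    using assms by (simp add: poly_niven_poly)
  have "sin z > 0" using assms by (simp add: sin_gt_zero)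
  with Q_pos show "0 < poly (niven_poly n a b) z * sin z" by simp
  have "z * (a - b * z) \<le> pi * a"
    using assms \<open>a - b * z > 0\<close> by (intro mult_mono) auto
  then have "(z * (a - b * z)) ^ n \<le> (pi * a) ^ n"
    using assms \<open>a - b * z > 0\<close> by (intro power_mono) auto
  then have "poly (niven_poly n a b) z \<le> (pi * a) ^ n / fact n"
    by (simp add: poly_niven_poly power_mult_distrib divide_right_mono)
  moreover have "poly (niven_poly n a b) z * sin z \<le> poly (niven_poly n a b) z"
    using Q_pos by (simp add: mult_left_le)
  ultimately show "poly (niven_poly n a b) z * sin z \<le> (pi * a) ^ n / fact n"
    by linarith
qed

lemma pi_not_in_Rats: "pi \<notin> \<rat>"
proof
  assume "pi \<in> \<rat>"
  then obtain a' b' :: int where "b' > 0" and pi_eq: "pi = of_int a' / of_int b'"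
    by (rule Rats_cases')
  define a where "a = real_of_int a'"
  define b where "b = real_of_int b'"
  have "a \<in> \<int>" "b \<in> \<int>" "b > 0"
    using \<open>b' > 0\<close> by (simp_all add: a_def b_def)
  have a_eq: "a = b * pi"
    using pi_eq \<open>b > 0\<close> unfolding a_def b_def by (simp add: field_simps)
  have "(\<lambda>n. inverse (fact n) * (pi * a) ^ n) \<longlonglongrightarrow> 0"
    using summable_LIMSEQ_zero[OF summable_exp] by blast
  then have "eventually (\<lambda>n. inverse (fact n) * (pi * a) ^ n < 1 / pi) sequentially"
    by (rule order_tendstoD(2)) simp
  then obtain n where "inverse (fact n) * (pi * a) ^ n < 1 / pi"
    by (auto simp: eventually_sequentially)
  then have small: "pi * ((pi * a) ^ n / fact n) < 1"
    using pi_gt_zero by (simp add: field_simps)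
  define Q where "Q = niven_poly n a b"
  define F where "F = (\<Sum>j<Suc n. smult ((-1) ^ j) ((pderiv ^^ (2 * j)) Q))"
  have "pderiv (pderiv F) + F = Q"
    unfolding F_def
    by (rule pderiv_pderiv_add_alternating_sum) (use degree_niven_poly[of n a b] in \<open>simp add: Q_def\<close>)
  then obtain z where z: "0 < z" "z < pi" and F_eq: "poly F pi + poly F 0 = pi * (poly Q z * sin z)"
    by (rule poly_pi_add_poly_0_eq_mean_value)
  have F_Ints: "poly F x \<in> \<int>" if "\<And>k. poly ((pderiv ^^ k) Q) x \<in> \<int>" for x
    unfolding F_def poly_sum poly_smult by (intro Ints_sum Ints_mult Ints_power Ints_minus Ints_1 that)
  have "a / b = pi" using a_eq \<open>b > 0\<close> by simp
  then have "poly F pi + poly F 0 \<in> \<int>"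
    using higher_pderiv_niven_poly_at_0_in_Ints[OF \<open>a \<in> \<int>\<close> \<open>b \<in> \<int>\<close>]
      higher_pderiv_niven_poly_at_quotient_in_Ints[OF \<open>a \<in> \<int>\<close> \<open>b \<in> \<int>\<close>] \<open>b > 0\<close>
    by (intro Ints_add F_Ints) (simp_all add: Q_def)
  then obtain m :: int where m: "poly F pi + poly F 0 = of_int m"
    by (rule Ints_cases)
  note bounds = niven_poly_times_sin_bounds[OF \<open>b > 0\<close> a_eq z, of n, folded Q_def]
  have "pi * (poly Q z * sin z) \<le> pi * ((pi * a) ^ n / fact n)"
    using mult_left_mono[OF bounds(2) pi_ge_zero] .
  with small have "pi * (poly Q z * sin z) < 1" by linarith
  moreover have "0 < pi * (poly Q z * sin z)" using bounds(1) by simp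
  ultimately have "0 < m" "m < 1" using m F_eq by simp_all
  then show False by simp
qed

lemma sin_eq_0_iff_of_Rats:
  fixes x :: real
  assumes "x \<in> \<rat>"
  shows "sin x = 0 \<longleftrightarrow> x = 0"
proof
  assume "sin x = 0"
  then obtain k :: int where k: "x = of_int k * pi"
    by (auto simp: sin_zero_iff_int2)
  show "x = 0"
  proof (rule ccontr)
    assume "x \<noteq> 0"
    then have "pi = x / of_int k" using k by simp
    then show False
      using assms pi_not_in_Rats by (metis Rats_divide Rats_of_int)
  qed
qed simp

theorem theorem1:
  shows "f (-1) = (INF x\<in>(UNIV::int set). f x) \<and> (\<forall>x::int. x \<noteq> -1 \<longrightarrow> f x > f (-1))"
proof -
  have f_min: "f (-1) = 0" by (simp add: f_def)
  have f_pos: "f x > 0" if "x \<noteq> -1" for x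
  proof -
    have "(real_of_int x + 1) / 100 \<in> \<rat>" "(real_of_int x + 1) / 100 \<noteq> 0"
      using that by (simp_all add: add_eq_0_iff)
    then show ?thesis by (simp add: f_def sin_eq_0_iff_of_Rats)
  qed
  moreover have "f x \<ge> 0" for x
    by (simp add: f_def)
  ultimately have "(INF x\<in>(UNIV::int set). f x) = f (-1)"
    by (intro cInf_eq_minimum rangeI) (auto simp: f_min)
  with f_min f_pos show ?thesis by simp
qed

end
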